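(* Assume the standing conventions of the context. Let $\Psi'=\binom{c_k}{d_l}$ be a consecutive pair in $Z'_{\mathrm I}$ (so $l\in\{k-1,k\}$), and suppose $\mathcal D_{Z,Z'}\neq\emptyset$. Then $(Z,\Lambda_{\Psi'})\in\mathcal D_{Z,Z'}$ if and only if \[ \begin{cases} a_k>c_k\text{ and }d_k\geq b_k, & \text{if $m'=m$ and $l=k$};\\ c_k\geq a_k\text{ and }b_{k-1}>d_{k-1}, & \text{if $m'=m$ and $l=k-1$};\\ a_k\geq c_k\text{ and }d_k>b_k, & \text{if $m'=m+1$ and $l=k$};\\ c_k>a_k\text{ and }b_{k-1}\geq d_{k-1}, & \text{if $m'=m+1$ and $l=k-1$}. \end{cases} \]
   Context: A symbol is an array $\Lambda=\binom{a'_1,\ldots,a'_{m_1}}{b'_1,\ldots,b'_{m_2}}$ of two strictly decreasing finite sequences of nonnegative integers (top row, bottom row); its defect is $\mathrm{def}(\Lambda)=m_1-m_2$. Standing assumptions: $Z=\binom{a_1,\ldots,a_{m+1}}{b_1,\ldots,b_m}$ is a special symbol of defect $1$, i.e. $a_1\ge b_1\ge a_2\ge b_2\ge\cdots\ge b_m\ge a_{m+1}$; $Z'=\binom{c_1,\ldots,c_{m'}}{d_1,\ldots,d_{m'}}$ is a special symbol of defect $0$, i.e. $c_1\ge d_1\ge c_2\ge d_2\ge\cdots\ge c_{m'}\ge d_{m'}$; and $m'\in\{m,m+1\}$. For a symbol $Y$, $Y_{\mathrm I}$ is the set of entries of $Y$ occurring in exactly one row. For $M\subset Z_{\mathrm I}$,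 $\Lambda_M$ is the symbol obtained from $Z$ by moving every entry of $M$ to the other row (rows re-sorted decreasingly); for $N\subset Z'_{\mathrm I}$, $\Lambda_N$ is obtained from $Z'$ in the same way. $\overline{\mathcal S}_Z=\{\Lambda_M: M\subset Z_{\mathrm I}\}$, $\overline{\mathcal S}_{Z'}=\{\Lambda_N:N\subset Z'_{\mathrm I}\}$; $\mathcal S_{Z,1}$ (resp. $\mathcal S_{Z',0}$) is the set of elements of $\overline{\mathcal S}_Z$ of defect $1$ (resp. of $\overline{\mathcal S}_{Z'}$ of defect $0$). A consecutive pair in $Z'_{\mathrm I}$ is a two-element subset $\{c_k,d_l\}\subset Z'_{\mathrm I}$, written $\binom{c_k}{d_l}$, with $l\in\{k-1,k\}$; a consecutive pair in $Z_{\mathrm I}$ is $\{a_k,b_l\}\subset Z_{\mathrm I}$, written $\binom{a_k}{b_l}$, with $l\in\{k-1,k\}$. Relation $\overline{\mathcal B}^+_{Z,Z'}\subset\overline{\mathcal S}_Z\times\overline{\mathcal S}_{Z'}$: for $\Lambda=\binom{a'_1,\ldots,a'_{m_1}}{b'_1,\ldots,b'_{m_2}}\in\overline{\mathcal S}_Z$ and $\Lambda'=\binom{c'_1,\ldots,c'_{m'_1}}{d'_1,\ldots,d'_{m'_2}}\in\overline{\mathcal S}_{Z'}$, $(\Lambda,\Lambda')\in\overline{\mathcal B}^+_{Z,Z'}$ iff $\mathrm{def}(\Lambda')=1-\mathrm{def}(\Lambda)$ and: if $m'=m$, $a'_i>d'_i\ge a'_{i+1}$ for $1\le i\le m'_2$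 and $b'_{i-1}>c'_i\ge b'_i$ for $1\le i\le m'_1$; if $m'=m+1$, $a'_i\ge d'_i>a'_{i+1}$ for $1\le i\le m'_2$ and $b'_{i-1}\ge c'_i>b'_i$ for $1\le i\le m'_1$; here $b'_0=+\infty$ and nonexistent entries $a'_j,b'_j$ beyond the row lengths are $-\infty$. Then $\mathcal D_{Z,Z'}=\overline{\mathcal B}^+_{Z,Z'}\cap(\mathcal S_{Z,1}\times\mathcal S_{Z',0})$. *)

theory Defs
  imports Main "HOL-Library.Extended_Real"
begin

(* A symbol: (top row, bottom row), each a strictly decreasing list of naturals. *)
type_synonym symbol = "nat list \<times> nat list"

definition is_symbol :: "symbol \<Rightarrow> bool" where
  "is_symbol \<Lambda> \<longleftrightarrow> sorted_wrt (>) (fst \<Lambda>) \<and> sorted_wrt (>) (snd \<Lambda>)"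

definition defect :: "symbol \<Rightarrow> int" where
  "defect \<Lambda> = int (length (fst \<Lambda>)) - int (length (snd \<Lambda>))"

definition entries_I :: "symbol \<Rightarrow> nat set" where
  "entries_I \<Lambda> = (set (fst \<Lambda>) - set (snd \<Lambda>)) \<union> (set (snd \<Lambda>) - set (fst \<Lambda>))"

definition dec_list :: "nat set \<Rightarrow> nat list" where
  "dec_list S = rev (sorted_list_of_set S)"

(* Lambda_M: move every entry of M to the other row *)
definition move :: "symbol \<Rightarrow> nat set \<Rightarrow> symbol" where
  "move \<Lambda> M =
     (dec_list ((set (fst \<Lambda>) - M) \<union> (set (snd \<Lambda>) \<inter> M)),
      dec_list ((set (snd \<Lambda>) - M) \<union> (set (fst \<Lambda>) \<inter> M)))"

(* 1-based entry of a row, nonexistent entries are -infinity *)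
definition ent :: "nat list \<Rightarrow> nat \<Rightarrow> ereal" where
  "ent xs i = (if 1 \<le> i \<and> i \<le> length xs then ereal (real (xs ! (i - 1))) else -\<infinity>)"

(* same, with index 0 giving +infinity (convention b'_0 = +infinity) *)
definition entB :: "nat list \<Rightarrow> nat \<Rightarrow> ereal" where
  "entB xs i = (if i = 0 then \<infinity> else ent xs i)"

definition special_def1 :: "symbol \<Rightarrow> bool" where
  "special_def1 Z \<longleftrightarrow> is_symbol Z \<and> length (fst Z) = length (snd Z) + 1 \<and>
     (\<forall>i. 1 \<le> i \<and> i \<le> length (snd Z) \<longrightarrow>
        ent (fst Z) i \<ge> ent (snd Z) i \<and> ent (snd Z) i \<ge> ent (fst Z) (i + 1))"

definition special_def0 :: "symbol \<Rightarrow> bool" where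
  "special_def0 Z' \<longleftrightarrow> is_symbol Z' \<and> length (fst Z') = length (snd Z') \<and>
     (\<forall>i. 1 \<le> i \<and> i \<le> length (snd Z') \<longrightarrow>
        ent (fst Z') i \<ge> ent (snd Z') i \<and>
        (i < length (snd Z') \<longrightarrow> ent (snd Z') i \<ge> ent (fst Z') (i + 1)))"

definition Sbar :: "symbol \<Rightarrow> symbol set" where
  "Sbar Z = {move Z M | M. M \<subseteq> entries_I Z}"

definition S_def :: "symbol \<Rightarrow> int \<Rightarrow> symbol set" where
  "S_def Z \<delta> = {\<Lambda> \<in> Sbar Z. defect \<Lambda> = \<delta>}"

definition Bplus :: "symbol \<Rightarrow> symbol \<Rightarrow> (symbol \<times> symbol) set" where
  "Bplus Z Z' = {(\<Lambda>, \<Lambda>'). \<Lambda> \<in> Sbar Z \<and> \<Lambda>' \<in> Sbar Z' \<and>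
     defect \<Lambda>' = 1 - defect \<Lambda> \<and>
     (let a = fst \<Lambda>; b = snd \<Lambda>; c = fst \<Lambda>'; d = snd \<Lambda>'; m = length (snd Z); m' = length (fst Z') in
      (m' = m \<longrightarrow>
         (\<forall>i. 1 \<le> i \<and> i \<le> length d \<longrightarrow> ent a i > ent d i \<and> ent d i \<ge> ent a (i + 1)) \<and>
         (\<forall>i. 1 \<le> i \<and> i \<le> length c \<longrightarrow> entB b (i - 1) > ent c i \<and> ent c i \<ge> ent b i)) \<and>
      (m' = m + 1 \<longrightarrow>
         (\<forall>i. 1 \<le> i \<and> i \<le> length d \<longrightarrow> ent a i \<ge> ent d i \<and> ent d i > ent a (i + 1)) \<and>
         (\<forall>i. 1 \<le> i \<and> i \<le> length c \<longrightarrow> entB b (i - 1) \<ge> ent c i \<and> ent c i > ent b i)))}"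

definition Dset :: "symbol \<Rightarrow> symbol \<Rightarrow> (symbol \<times> symbol) set" where
  "Dset Z Z' = Bplus Z Z' \<inter> (S_def Z 1 \<times> S_def Z' 0)"

end

theory Submission
  imports Defs
begin

text \<open>For a strictly decreasing row let \<open>N(t)\<close> be the number of its entries \<open>\<ge> t\<close>. Interlacing
  inequalities between strictly decreasing rows are equivalent to inequalities between these
  counting functions, and moving entries from one row to the other does not change the sum of the
  counting functions of the two rows. The four families of inequalities defining \<open>\<B>\<^sup>+\<close> add up in
  pairs to inequalities between these invariant sums; for the special symbols \<open>Z\<close> and \<open>Z'\<close> the
  counting functions of the two rows differ by at most one, so the sum inequalities split back
  into the four families. Hence \<open>\<D>\<^sub>Z\<^sub>,\<^sub>Z\<^sub>' \<noteq> {}\<close> forces \<open>(Z, Z')\<close> itself to satisfy them.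
  Moving the consecutive pair \<open>\<Psi>'\<close> swaps the neighbouring entries \<open>c\<^sub>k\<close> and \<open>d\<^sub>l\<close>, so only
  the inequalities at these two positions can change, and they are the ones listed.\<close>

lemma sorted_wrt_greater_imp_distinct: "sorted_wrt (>) (xs :: 'a :: linorder list) \<Longrightarrow> distinct xs"
  by (metis distinct_rev sorted_wrt_rev strict_sorted_iff)

lemma sorted_wrt_greater_nth_antimono:
  "sorted_wrt (>) xs \<Longrightarrow> i \<le> j \<Longrightarrow> j < length xs \<Longrightarrow> xs ! j \<le> (xs ! i :: 'a :: linorder)"
  using sorted_wrt_nth_less[of "(>)" xs i j] by (cases "i = j") auto

lemma sorted_wrt_greater_list_update:
  assumes "sorted_wrt (>) xs" "p < length xs"
    and "0 < p \<Longrightarrow> w < xs ! (p - 1)" "Suc p < length xs \<Longrightarrow> xs ! Suc p < (w :: 'a :: linorder)"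
  shows "sorted_wrt (>) (xs[p := w])"
  using assms unfolding sorted_wrt_iff_nth_Suc_transp[OF transp_on_greater]
  by (auto simp: nth_list_update)

lemma dec_list_set:
  assumes "sorted_wrt (>) xs"
  shows "dec_list (set xs) = xs"
  using assms by (metis dec_list_def rev_rev_ident set_rev sorted_list_of_set.idem_if_sorted_distinct
      sorted_wrt_rev strict_sorted_iff)

lemma
  assumes "finite S"
  shows sorted_dec_list: "sorted_wrt (>) (dec_list S)" and set_dec_list: "set (dec_list S) = S"
  using assms by (auto simp: dec_list_def sorted_wrt_rev)

definition count_ge :: "'a :: linorder list \<Rightarrow> 'a \<Rightarrow> nat" where
  "count_ge xs x = card {y \<in> set xs. x \<le> y}"

lemma count_ge_bot: "sorted_wrt (>) xs \<Longrightarrow> count_ge xs 0 = length (xs :: nat list)"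
  by (simp add: count_ge_def distinct_card sorted_wrt_greater_imp_distinct)

lemma le_count_ge_iff:
  assumes sorted: "sorted_wrt (>) xs"
  shows "j \<le> count_ge xs x \<longleftrightarrow> j = 0 \<or> (j \<le> length xs \<and> x \<le> xs ! (j - 1))"
proof -
  have card_take: "card (set (take i xs)) = min i (length xs)" for i
    using sorted_wrt_greater_imp_distinct[OF sorted] by (simp add: distinct_card)
  have lower: "j \<le> count_ge xs x" if "j \<le> length xs" "x \<le> xs ! (j - 1)"
  proof -
    have "set (take j xs) \<subseteq> {y \<in> set xs. x \<le> y}"
    proof
      fix y assume "y \<in> set (take j xs)"
      then obtain i where "i < j" "y = xs ! i"
        using that(1) by (auto simp: in_set_conv_nth)
      then show "y \<in> {y \<in> set xs. x \<le> y}"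
        using that sorted_wrt_greater_nth_antimono[OF sorted, of i "j - 1"] by force
    qed
    then have "card (set (take j xs)) \<le> count_ge xs x"
      unfolding count_ge_def by (simp add: card_mono)
    then show ?thesis
      using card_take[of j] that by simp
  qed
  have upper: "count_ge xs x < j" if "0 < j" "\<not> (j \<le> length xs \<and> x \<le> xs ! (j - 1))"
  proof (cases "j \<le> length xs")
    case True
    then have small: "xs ! (j - 1) < x"
      using that by simp
    have "{y \<in> set xs. x \<le> y} \<subseteq> set (take (j - 1) xs)"
    proof
      fix y assume "y \<in> {y \<in> set xs. x \<le> y}"
      then obtain i where "i < length xs" "y = xs ! i" "x \<le> y"
        by (auto simp: in_set_conv_nth)
      moreover have "i < j - 1"
        using calculation small sorted_wrt_greater_nth_antimono[OF sorted, of "j - 1" i]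
        by (metis leD not_le_imp_less order.trans)
      ultimately show "y \<in> set (take (j - 1) xs)"
        by (auto simp: in_set_conv_nth)
    qed
    then have "count_ge xs x \<le> card (set (take (j - 1) xs))"
      unfolding count_ge_def by (simp add: card_mono)
    then show ?thesis
      using card_take[of "j - 1"] that True by simp
  next
    case False
    have "count_ge xs x \<le> card (set xs)"
      unfolding count_ge_def by (simp add: card_mono)
    then show ?thesis
      using card_take[of "length xs"] False by simp
  qed
  show ?thesis
    using lower upper by (cases "j = 0") (auto simp: not_less[symmetric])
qed

lemma nth_shift_le_iff_count_ge_le:
  fixes u v :: "'a :: linordered_ab_semigroup_add list"
  assumes su: "sorted_wrt (>) u" and sv: "sorted_wrt (>) v"
    and lu: "length u = L + e" and lv: "L \<le> length v"
  shows "(\<forall>i<L. u ! (i + e) + s \<le> v ! i) \<longleftrightarrow> (\<forall>x. count_ge u x \<le> count_ge v (x + s) + e)"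
proof
  assume le: "\<forall>i<L. u ! (i + e) + s \<le> v ! i"
  show "\<forall>x. count_ge u x \<le> count_ge v (x + s) + e"
  proof
    fix x
    define j where "j = count_ge u x"
    show "count_ge u x \<le> count_ge v (x + s) + e"
    proof (cases "j \<le> e")
      case False
      then obtain i where j: "j = Suc (i + e)"
        by (metis add.commute less_imp_Suc_add not_le)
      then have i: "Suc (i + e) \<le> length u" and x: "x \<le> u ! (i + e)"
        using le_count_ge_iff[OF su, of j x] by (auto simp: j_def)
      have "i < L"
        using i lu by simp
      moreover have "x + s \<le> v ! i"
        using le[rule_format, OF \<open>i < L\<close>] x by (auto intro: add_right_mono order_trans)
      ultimately have "Suc i \<le> count_ge v (x + s)"
        using le_count_ge_iff[OF sv, of "Suc i"] lv by auto
      then show ?thesis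
        using j j_def by simp
    qed (simp add: j_def)
  qed
next
  assume le: "\<forall>x. count_ge u x \<le> count_ge v (x + s) + e"
  show "\<forall>i<L. u ! (i + e) + s \<le> v ! i"
  proof (intro allI impI)
    fix i assume i: "i < L"
    have "Suc (i + e) \<le> count_ge u (u ! (i + e))"
      using le_count_ge_iff[OF su] i lu by auto
    then have "Suc i \<le> count_ge v (u ! (i + e) + s)"
      using le[rule_format, of "u ! (i + e)"] by simp
    then show "u ! (i + e) + s \<le> v ! i"
      using le_count_ge_iff[OF sv] by auto
  qed
qed

lemma
  shows sorted_fst_move: "sorted_wrt (>) (fst (move \<Lambda> M))"
    and sorted_snd_move: "sorted_wrt (>) (snd (move \<Lambda> M))"
  by (simp_all add: move_def sorted_dec_list)

lemma count_ge_move: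
  assumes "M \<subseteq> entries_I \<Lambda>"
  shows "count_ge (fst (move \<Lambda> M)) x + count_ge (snd (move \<Lambda> M)) x
    = count_ge (fst \<Lambda>) x + count_ge (snd \<Lambda>) x"
proof -
  let ?ge = "\<lambda>S. {y \<in> S. x \<le> y}"
  define S1 where "S1 = (set (fst \<Lambda>) - M) \<union> (set (snd \<Lambda>) \<inter> M)"
  define S2 where "S2 = (set (snd \<Lambda>) - M) \<union> (set (fst \<Lambda>) \<inter> M)"
  have "?ge S1 \<union> ?ge S2 = ?ge (set (fst \<Lambda>)) \<union> ?ge (set (snd \<Lambda>))"
    "?ge S1 \<inter> ?ge S2 = ?ge (set (fst \<Lambda>)) \<inter> ?ge (set (snd \<Lambda>))"
    using assms by (auto simp: S1_def S2_def entries_I_def)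
  then have "card (?ge S1) + card (?ge S2) = card (?ge (set (fst \<Lambda>))) + card (?ge (set (snd \<Lambda>)))"
    using card_Un_Int[of "?ge S1" "?ge S2"] card_Un_Int[of "?ge (set (fst \<Lambda>))" "?ge (set (snd \<Lambda>))"]
    by (simp add: S1_def S2_def)
  then show ?thesis
    unfolding count_ge_def move_def S1_def [symmetric] S2_def [symmetric]
    by (simp add: S1_def S2_def set_dec_list)
qed

lemma move_pair_eq_swap:
  assumes "sorted_wrt (>) xs" "sorted_wrt (>) ys" "p < length xs" "q < length ys"
    and "xs ! p \<notin> set ys" "ys ! q \<notin> set xs"
    and "sorted_wrt (>) (xs[p := ys ! q])" "sorted_wrt (>) (ys[q := xs ! p])"
  shows "move (xs, ys) {xs ! p, ys ! q} = (xs[p := ys ! q], ys[q := xs ! p])"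
proof -
  have "distinct xs" "distinct ys"
    using assms(1,2) by (simp_all add: sorted_wrt_greater_imp_distinct)
  then have "set (xs[p := ys ! q]) = (set xs - {xs ! p, ys ! q}) \<union> (set ys \<inter> {xs ! p, ys ! q})"
    "set (ys[q := xs ! p]) = (set ys - {xs ! p, ys ! q}) \<union> (set xs \<inter> {xs ! p, ys ! q})"
    using assms(3-6) by (auto simp: set_update_distinct)
  then show ?thesis
    using dec_list_set[OF assms(7)] dec_list_set[OF assms(8)] by (simp add: move_def)
qed

lemma count_ge_Sbar:
  "\<Lambda> \<in> Sbar Z \<Longrightarrow> count_ge (fst \<Lambda>) x + count_ge (snd \<Lambda>) x = count_ge (fst Z) x + count_ge (snd Z) x"
  by (auto simp: Sbar_def count_ge_move)

lemma sorted_rows_S_def: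
  "\<Lambda> \<in> S_def Z \<delta> \<Longrightarrow> sorted_wrt (>) (fst \<Lambda>) \<and> sorted_wrt (>) (snd \<Lambda>)"
  by (auto simp: S_def_def Sbar_def sorted_fst_move sorted_snd_move)

lemma length_S_def:
  assumes "\<Lambda> \<in> S_def Z \<delta>" and "is_symbol Z"
  shows "length (fst \<Lambda>) + length (snd \<Lambda>) = length (fst Z) + length (snd Z)"
    and "int (length (fst \<Lambda>)) - int (length (snd \<Lambda>)) = \<delta>"
proof -
  have "\<Lambda> \<in> Sbar Z" "defect \<Lambda> = \<delta>"
    using assms(1) by (simp_all add: S_def_def)
  moreover have "sorted_wrt (>) (fst \<Lambda>)" "sorted_wrt (>) (snd \<Lambda>)"
    using sorted_rows_S_def[OF assms(1)] by simp_all
  ultimately show "length (fst \<Lambda>) + length (snd \<Lambda>) = length (fst Z) + length (snd Z)"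
    "int (length (fst \<Lambda>)) - int (length (snd \<Lambda>)) = \<delta>"
    using count_ge_Sbar[of \<Lambda> Z 0] assms(2) by (simp_all add: count_ge_bot is_symbol_def defect_def)
qed

lemma self_mem_S_def: "is_symbol Z \<Longrightarrow> Z \<in> S_def Z (defect Z)"
  by (cases Z) (force simp: S_def_def Sbar_def move_def dec_list_set is_symbol_def)

lemma ent_Suc: "ent xs (Suc i) = (if i < length xs then ereal (real (xs ! i)) else -\<infinity>)"
  by (simp add: ent_def)

lemma entB_nth: "i \<le> length xs \<Longrightarrow> entB xs i = (if i = 0 then \<infinity> else ereal (real (xs ! (i - 1))))"
  by (simp add: entB_def ent_def)

lemma all_1_le_le_iff_all_less: "(\<forall>i. 1 \<le> i \<and> i \<le> n \<longrightarrow> P i) \<longleftrightarrow> (\<forall>i<n. P (Suc i))"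
proof
  show "\<forall>i<n. P (Suc i)" if "\<forall>i. 1 \<le> i \<and> i \<le> n \<longrightarrow> P i"
    using that by (simp add: Suc_le_eq)
  show "\<forall>i. 1 \<le> i \<and> i \<le> n \<longrightarrow> P i" if "\<forall>i<n. P (Suc i)"
  proof (intro allI impI)
    fix i assume "1 \<le> i \<and> i \<le> n"
    then obtain j where "i = Suc j" "j < n"
      by (cases i) auto
    then show "P i"
      using that by simp
  qed
qed

lemma all_less_pred_Suc_iff: "(\<forall>i<m - 1. P (Suc i)) \<longleftrightarrow> (\<forall>i<m. 0 < i \<longrightarrow> P i)"
proof
  show "\<forall>i<m. 0 < i \<longrightarrow> P i" if "\<forall>i<m - 1. P (Suc i)"
  proof (intro allI impI)
    fix i assume "i < m" "0 < i"
    then obtain j where "i = Suc j" "j < m - 1"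
      by (cases i) auto
    then show "P i"
      using that by simp
  qed
  show "\<forall>i<m - 1. P (Suc i)" if "\<forall>i<m. 0 < i \<longrightarrow> P i"
    using that by simp
qed

lemma special_def1_nth:
  assumes "special_def1 (a, b)"
  shows "sorted_wrt (>) a" "sorted_wrt (>) b" "length a = Suc (length b)"
    and "i < length b \<Longrightarrow> b ! i \<le> a ! i \<and> a ! (i + 1) \<le> b ! i"
  using assms unfolding special_def1_def is_symbol_def all_1_le_le_iff_all_less
  by (auto simp: ent_Suc)

lemma special_def1_count_ge:
  assumes "special_def1 (a, b)"
  shows "count_ge b x \<le> count_ge a x \<and> count_ge a x \<le> count_ge b x + 1"
  using nth_shift_le_iff_count_ge_le[of b a "length b" 0 0] nth_shift_le_iff_count_ge_le[of a b "length b" 1 0]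
    special_def1_nth[OF assms] by auto

lemma special_def0_nth:
  assumes "special_def0 (c, d)"
  shows "sorted_wrt (>) c" "sorted_wrt (>) d" "length d = length c"
    and "i < length c \<Longrightarrow> d ! i \<le> c ! i" and "Suc i < length c \<Longrightarrow> c ! Suc i \<le> d ! i"
  using assms unfolding special_def0_def is_symbol_def all_1_le_le_iff_all_less
  by (auto simp: ent_Suc)

lemma special_def0_count_ge:
  assumes "special_def0 (c, d)"
  shows "count_ge d x \<le> count_ge c x \<and> count_ge c x \<le> count_ge d x + 1"
proof (cases "c = []")
  case False
  then show ?thesis
    using nth_shift_le_iff_count_ge_le[of d c "length c" 0 0]
      nth_shift_le_iff_count_ge_le[of c d "length c - 1" 1 0] special_def0_nth[OF assms]
    by auto
qed (use special_def0_nth(3)[OF assms] in \<open>simp add: count_ge_def\<close>)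

lemma length_S_def_1:
  assumes "(a', b') \<in> S_def (a, b) 1" and "special_def1 (a, b)"
  shows "length a' = Suc (length b) \<and> length b' = length b"
  using length_S_def[OF assms(1)] assms(2) by (auto simp: special_def1_def)

lemma length_S_def_0:
  assumes "(c', d') \<in> S_def (c, d) 0" and "special_def0 (c, d)"
  shows "length c' = length c \<and> length d' = length c"
  using length_S_def[OF assms(1)] assms(2) by (auto simp: special_def0_def)

lemma special_def0_pair_strict:
  assumes "special_def0 (c, d)" "p < length c" "c ! p \<notin> set d" "d ! q \<notin> set c"
  shows "q = p \<Longrightarrow> d ! q < c ! p" and "Suc q = p \<Longrightarrow> c ! p < d ! q"
  using special_def0_nth[OF assms(1)] assms(2-4) nth_mem[of p c] nth_mem[of q d]
  by (fastforce simp: order_le_less)+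

lemma special_def0_swap_sorted:
  assumes Z': "special_def0 (c, d)" and p: "p < length c" and pq: "q = p \<or> Suc q = p"
    and "c ! p \<notin> set d" "d ! q \<notin> set c"
  shows "sorted_wrt (>) (c[p := d ! q])" "sorted_wrt (>) (d[q := c ! p])"
proof -
  note Z'_nth = special_def0_nth[OF Z']
  have c_step: "c ! Suc i < c ! i" and d_step: "d ! Suc i < d ! i" if "Suc i < length c" for i
    using that sorted_wrt_nth_less[OF Z'_nth(1)] sorted_wrt_nth_less[OF Z'_nth(2)] Z'_nth(3) by auto
  have c_ne: "c ! i \<noteq> d ! q" and d_ne: "d ! i \<noteq> c ! p" if "i < length c" for i
    using that assms(4,5) Z'_nth(3) by (metis nth_mem)+
  have strict: "q = p \<Longrightarrow> d ! q < c ! p" "Suc q = p \<Longrightarrow> c ! p < d ! q"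
    using special_def0_pair_strict[OF Z' p assms(4,5)] by blast+
  have "(0 < p \<longrightarrow> d ! q < c ! (p - 1)) \<and> (Suc p < length c \<longrightarrow> c ! Suc p < d ! q) \<and>
      (0 < q \<longrightarrow> c ! p < d ! (q - 1)) \<and> (Suc q < length c \<longrightarrow> d ! Suc q < c ! p)"
    using pq
  proof
    assume q: "q = p"
    have "0 < p \<Longrightarrow> d ! q < c ! (p - 1)"
      using strict(1)[OF q] c_step[of "p - 1"] p by simp
    moreover have "Suc p < length c \<Longrightarrow> c ! Suc p < d ! q"
      using Z'_nth(5)[of p] c_ne[of "Suc p"] q by (simp add: order_le_less)
    moreover have "0 < q \<Longrightarrow> c ! p < d ! (q - 1)"
      using Z'_nth(5)[of "p - 1"] d_ne[of "p - 1"] p q by (cases p) (auto simp: order_le_less)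
    moreover have "Suc q < length c \<Longrightarrow> d ! Suc q < c ! p"
      using strict(1)[OF q] d_step[of p] q by simp
    ultimately show ?thesis
      by blast
  next
    assume q: "Suc q = p"
    have "0 < p \<Longrightarrow> d ! q < c ! (p - 1)"
      using Z'_nth(4)[of q] c_ne[of q] p q by (auto simp: order_le_less)
    moreover have "Suc p < length c \<Longrightarrow> c ! Suc p < d ! q"
      using strict(2)[OF q] c_step[of p] by simp
    moreover have "0 < q \<Longrightarrow> c ! p < d ! (q - 1)"
      using strict(2)[OF q] d_step[of "q - 1"] p q by simp
    moreover have "Suc q < length c \<Longrightarrow> d ! Suc q < c ! p"
      using Z'_nth(4)[of p] d_ne[of p] p q by (simp add: order_le_less)
    ultimately show ?thesis
      by blast
  qed
  then show "sorted_wrt (>) (c[p := d ! q])" "sorted_wrt (>) (d[q := c ! p])"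
    using p pq Z'_nth(3) by (auto intro!: sorted_wrt_greater_list_update Z'_nth(1,2))
qed

lemma move_consecutive_pair:
  assumes Z': "special_def0 (c, d)" and p: "p < length c" and pq: "q = p \<or> Suc q = p"
    and pair: "{c ! p, d ! q} \<subseteq> entries_I (c, d)"
  shows "move (c, d) {c ! p, d ! q} = (c[p := d ! q], d[q := c ! p])"
    and "(c[p := d ! q], d[q := c ! p]) \<in> S_def (c, d) 0"
proof -
  note Z'_nth = special_def0_nth[OF Z']
  have q: "q < length d"
    using p pq Z'_nth(3) by auto
  have fresh: "c ! p \<notin> set d" "d ! q \<notin> set c"
    using pair p q by (auto simp: entries_I_def)
  show swap: "move (c, d) {c ! p, d ! q} = (c[p := d ! q], d[q := c ! p])"
    using move_pair_eq_swap[OF Z'_nth(1,2) p q fresh special_def0_swap_sorted[OF Z' p pq fresh]] .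
  show "(c[p := d ! q], d[q := c ! p]) \<in> S_def (c, d) 0"
  proof -
    have "(c[p := d ! q], d[q := c ! p]) \<in> Sbar (c, d)"
      unfolding Sbar_def using pair swap[symmetric] by blast
    then show ?thesis
      using Z'_nth(3) by (simp add: S_def_def defect_def)
  qed
qed

text \<open>The inequalities defining \<open>\<B>\<^sup>+\<close> for \<open>m' = m\<close> and for \<open>m' = m + 1\<close>, transcribed to
  0-based list indices for symbols with rows of lengths \<open>m + 1, m\<close> and \<open>m', m'\<close>.\<close>

definition interlaced_eq :: "nat list \<Rightarrow> nat list \<Rightarrow> nat list \<Rightarrow> nat list \<Rightarrow> nat \<Rightarrow> bool" where
  "interlaced_eq a b c d m \<longleftrightarrow> (\<forall>i<m.
     d ! i < a ! i \<and> a ! (i + 1) \<le> d ! i \<and> (0 < i \<longrightarrow> c ! i < b ! (i - 1)) \<and> b ! i \<le> c ! i)"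

definition interlaced_succ :: "nat list \<Rightarrow> nat list \<Rightarrow> nat list \<Rightarrow> nat list \<Rightarrow> nat \<Rightarrow> bool" where
  "interlaced_succ a b c d m \<longleftrightarrow>
     (\<forall>i\<le>m. d ! i \<le> a ! i \<and> (0 < i \<longrightarrow> c ! i \<le> b ! (i - 1))) \<and>
     (\<forall>i<m. a ! (i + 1) < d ! i \<and> b ! i < c ! i)"

definition interlaced :: "nat \<Rightarrow> nat \<Rightarrow> nat list \<Rightarrow> nat list \<Rightarrow> nat list \<Rightarrow> nat list \<Rightarrow> bool" where
  "interlaced m m' a b c d \<longleftrightarrow>
     (m' = m \<longrightarrow> interlaced_eq a b c d m) \<and> (m' = m + 1 \<longrightarrow> interlaced_succ a b c d m)"

lemma Bplus_conds_eq_iff: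
  assumes "length a = Suc m" "length b = m" "length c = m" "length d = m"
  shows "((\<forall>i. 1 \<le> i \<and> i \<le> length d \<longrightarrow> ent a i > ent d i \<and> ent d i \<ge> ent a (i + 1)) \<and>
          (\<forall>i. 1 \<le> i \<and> i \<le> length c \<longrightarrow> entB b (i - 1) > ent c i \<and> ent c i \<ge> ent b i))
     \<longleftrightarrow> interlaced_eq a b c d m"
  unfolding all_1_le_le_iff_all_less interlaced_eq_def
  using assms by (auto simp: ent_Suc entB_nth)

lemma Bplus_conds_succ_iff:
  assumes "length a = Suc m" "length b = m" "length c = Suc m" "length d = Suc m"
  shows "((\<forall>i. 1 \<le> i \<and> i \<le> length d \<longrightarrow> ent a i \<ge> ent d i \<and> ent d i > ent a (i + 1)) \<and>
          (\<forall>i. 1 \<le> i \<and> i \<le> length c \<longrightarrow> entB b (i - 1) \<ge> ent c i \<and> ent c i > ent b i))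
     \<longleftrightarrow> interlaced_succ a b c d m"
proof -
  have "(\<forall>i<Suc m. ent a (Suc i) \<ge> ent d (Suc i) \<and> ent d (Suc i) > ent a (Suc i + 1))
      \<longleftrightarrow> (\<forall>i\<le>m. d ! i \<le> a ! i) \<and> (\<forall>i<m. a ! (i + 1) < d ! i)"
    using assms by (auto simp: ent_Suc less_Suc_eq_le)
  moreover have "(\<forall>i<Suc m. entB b i \<ge> ent c (Suc i)) \<longleftrightarrow> (\<forall>i\<le>m. 0 < i \<longrightarrow> c ! i \<le> b ! (i - 1))"
    using assms by (simp add: ent_Suc entB_nth less_Suc_eq_le) blast
  moreover have "(\<forall>i<Suc m. ent c (Suc i) > ent b (Suc i)) \<longleftrightarrow> (\<forall>i<m. b ! i < c ! i)"
    using assms by (simp add: ent_Suc less_Suc_eq)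
  ultimately show ?thesis
    unfolding all_1_le_le_iff_all_less interlaced_succ_def using assms by (simp add: all_conj_distrib) blast
qed

definition count_interlaced_eq :: "nat list \<Rightarrow> nat list \<Rightarrow> nat list \<Rightarrow> nat list \<Rightarrow> bool" where
  "count_interlaced_eq a b c d \<longleftrightarrow> (\<forall>x.
     count_ge d x \<le> count_ge a (x + 1) \<and> count_ge a x \<le> count_ge d x + 1 \<and>
     count_ge c x \<le> count_ge b (x + 1) + 1 \<and> count_ge b x \<le> count_ge c x)"

definition count_interlaced_succ :: "nat list \<Rightarrow> nat list \<Rightarrow> nat list \<Rightarrow> nat list \<Rightarrow> bool" where
  "count_interlaced_succ a b c d \<longleftrightarrow> (\<forall>x.
     count_ge d x \<le> count_ge a x \<and> count_ge a x \<le> count_ge d (x + 1) + 1 \<and>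
     count_ge c x \<le> count_ge b x + 1 \<and> count_ge b x \<le> count_ge c (x + 1))"

lemma interlaced_eq_iff_count:
  assumes "sorted_wrt (>) a" "sorted_wrt (>) b" "sorted_wrt (>) c" "sorted_wrt (>) d"
    and "length a = Suc m" "length b = m" "length c = m" "length d = m" and "0 < m"
  shows "interlaced_eq a b c d m \<longleftrightarrow> count_interlaced_eq a b c d"
proof -
  have "interlaced_eq a b c d m \<longleftrightarrow>
      (\<forall>i<m. d ! i < a ! i) \<and> (\<forall>i<m. a ! (i + 1) \<le> d ! i) \<and>
      (\<forall>i<m - 1. c ! (i + 1) < b ! i) \<and> (\<forall>i<m. b ! i \<le> c ! i)"
    using all_less_pred_Suc_iff[of m "\<lambda>i. c ! i < b ! (i - 1)"]
    unfolding interlaced_eq_def by auto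
  also have "\<dots> \<longleftrightarrow> count_interlaced_eq a b c d"
    unfolding count_interlaced_eq_def
    using nth_shift_le_iff_count_ge_le[of d a m 0 1] nth_shift_le_iff_count_ge_le[of a d m 1 0]
      nth_shift_le_iff_count_ge_le[of c b "m - 1" 1 1] nth_shift_le_iff_count_ge_le[of b c m 0 0] assms
    by (auto simp: Suc_le_eq)
  finally show ?thesis .
qed

lemma interlaced_succ_iff_count:
  assumes "sorted_wrt (>) a" "sorted_wrt (>) b" "sorted_wrt (>) c" "sorted_wrt (>) d"
    and "length a = Suc m" "length b = m" "length c = Suc m" "length d = Suc m"
  shows "interlaced_succ a b c d m \<longleftrightarrow> count_interlaced_succ a b c d"
proof -
  have "interlaced_succ a b c d m \<longleftrightarrow>
      (\<forall>i<Suc m. d ! i \<le> a ! i) \<and> (\<forall>i<m. a ! (i + 1) < d ! i) \<and>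
      (\<forall>i<m. c ! (i + 1) \<le> b ! i) \<and> (\<forall>i<m. b ! i < c ! i)"
    using all_less_pred_Suc_iff[of "Suc m" "\<lambda>i. c ! i \<le> b ! (i - 1)"]
    unfolding interlaced_succ_def by (auto simp: less_Suc_eq_le)
  also have "\<dots> \<longleftrightarrow> count_interlaced_succ a b c d"
    unfolding count_interlaced_succ_def
    using nth_shift_le_iff_count_ge_le[of d a "Suc m" 0 0] nth_shift_le_iff_count_ge_le[of a d m 1 1]
      nth_shift_le_iff_count_ge_le[of c b m 1 0] nth_shift_le_iff_count_ge_le[of b c m 0 1] assms
    by (auto simp: Suc_le_eq)
  finally show ?thesis .
qed

lemma count_interlaced_eq_transfer:
  assumes "count_interlaced_eq a' b' c' d'"
    and "\<And>x. count_ge a' x + count_ge b' x = count_ge a x + count_ge b x"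
    and "\<And>x. count_ge c' x + count_ge d' x = count_ge c x + count_ge d x"
    and "\<And>x. count_ge b x \<le> count_ge a x \<and> count_ge a x \<le> count_ge b x + 1"
    and "\<And>x. count_ge d x \<le> count_ge c x \<and> count_ge c x \<le> count_ge d x + 1"
  shows "count_interlaced_eq a b c d"
  unfolding count_interlaced_eq_def
proof
  fix x
  show "count_ge d x \<le> count_ge a (x + 1) \<and> count_ge a x \<le> count_ge d x + 1 \<and>
     count_ge c x \<le> count_ge b (x + 1) + 1 \<and> count_ge b x \<le> count_ge c x"
    using assms(1)[unfolded count_interlaced_eq_def, rule_format, of x]
      assms(2)[of x] assms(2)[of "x + 1"] assms(3)[of x] assms(4)[of x] assms(4)[of "x + 1"] assms(5)[of x]
    by linarith
qed

lemma count_interlaced_succ_transfer: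
  assumes "count_interlaced_succ a' b' c' d'"
    and "\<And>x. count_ge a' x + count_ge b' x = count_ge a x + count_ge b x"
    and "\<And>x. count_ge c' x + count_ge d' x = count_ge c x + count_ge d x"
    and "\<And>x. count_ge b x \<le> count_ge a x \<and> count_ge a x \<le> count_ge b x + 1"
    and "\<And>x. count_ge d x \<le> count_ge c x \<and> count_ge c x \<le> count_ge d x + 1"
  shows "count_interlaced_succ a b c d"
  unfolding count_interlaced_succ_def
proof
  fix x
  show "count_ge d x \<le> count_ge a x \<and> count_ge a x \<le> count_ge d (x + 1) + 1 \<and>
     count_ge c x \<le> count_ge b x + 1 \<and> count_ge b x \<le> count_ge c (x + 1)"
    using assms(1)[unfolded count_interlaced_succ_def, rule_format, of x]
      assms(2)[of x] assms(3)[of x] assms(3)[of "x + 1"] assms(4)[of x] assms(5)[of x] assms(5)[of "x + 1"]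
    by linarith
qed

lemma mem_Dset_iff:
  assumes Z: "special_def1 (a, b)" "length b = m" and Z': "special_def0 (c, d)" "length c = m'"
    and \<Lambda>: "(a', b') \<in> S_def (a, b) 1" and \<Lambda>': "(c', d') \<in> S_def (c, d) 0"
  shows "((a', b'), (c', d')) \<in> Dset (a, b) (c, d) \<longleftrightarrow> interlaced m m' a' b' c' d'"
proof -
  have lengths: "length a' = Suc m" "length b' = m" "length c' = m'" "length d' = m'"
    using length_S_def_1[OF \<Lambda> Z(1)] length_S_def_0[OF \<Lambda>' Z'(1)] Z(2) Z'(2) by auto
  have "defect (c', d') = 1 - defect (a', b')"
    using lengths by (simp add: defect_def)
  then show ?thesis
    using \<Lambda> \<Lambda>' lengths Z(2) Z'(2) Bplus_conds_eq_iff[of a' m b' c' d'] Bplus_conds_succ_iff[of a' m b' c' d']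
    by (auto simp: Dset_def Bplus_def S_def_def Let_def interlaced_def)
qed

lemma Dset_nonempty_imp_interlaced:
  assumes Z: "special_def1 (a, b)" "length b = m" and Z': "special_def0 (c, d)" "length c = m'"
    and "0 < m'" and "Dset (a, b) (c, d) \<noteq> {}"
  shows "interlaced m m' a b c d"
proof -
  obtain a' b' c' d' where D: "((a', b'), (c', d')) \<in> Dset (a, b) (c, d)"
    using assms(6) by auto
  then have \<Lambda>: "(a', b') \<in> S_def (a, b) 1" and \<Lambda>': "(c', d') \<in> S_def (c, d) 0"
    by (auto simp: Dset_def)
  have sums: "count_ge a' x + count_ge b' x = count_ge a x + count_ge b x"
    "count_ge c' x + count_ge d' x = count_ge c x + count_ge d x" for x
    using count_ge_Sbar \<Lambda> \<Lambda>' by (fastforce simp: S_def_def)+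
  have lists: "sorted_wrt (>) a'" "sorted_wrt (>) b'" "sorted_wrt (>) c'" "sorted_wrt (>) d'"
    "length a' = Suc m" "length b' = m" "length c' = m'" "length d' = m'"
    using sorted_rows_S_def[OF \<Lambda>] sorted_rows_S_def[OF \<Lambda>'] length_S_def_1[OF \<Lambda> Z(1)]
      length_S_def_0[OF \<Lambda>' Z'(1)] Z(2) Z'(2) by auto
  have interlaced': "interlaced m m' a' b' c' d'"
    using mem_Dset_iff[OF Z Z' \<Lambda> \<Lambda>'] D by simp
  note Z_lists = special_def1_nth(1-3)[OF Z(1)] special_def0_nth(1-3)[OF Z'(1)] Z(2) Z'(2)
  note transfer = sums special_def1_count_ge[OF Z(1)] special_def0_count_ge[OF Z'(1)]
  have "interlaced_eq a b c d m" if "m' = m"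
  proof -
    have "count_interlaced_eq a' b' c' d'"
      using interlaced' interlaced_eq_iff_count[of a' b' c' d' m] lists that \<open>0 < m'\<close>
      by (simp add: interlaced_def)
    then show ?thesis
      using count_interlaced_eq_transfer[OF _ transfer] interlaced_eq_iff_count[of a b c d m]
        Z_lists that \<open>0 < m'\<close> by auto
  qed
  moreover have "interlaced_succ a b c d m" if "m' = m + 1"
  proof -
    have "count_interlaced_succ a' b' c' d'"
      using interlaced' interlaced_succ_iff_count[of a' b' c' d' m] lists that
      by (simp add: interlaced_def)
    then show ?thesis
      using count_interlaced_succ_transfer[OF _ transfer] interlaced_succ_iff_count[of a b c d m]
        Z_lists that by auto
  qed
  ultimately show ?thesis
    by (simp add: interlaced_def)
qed

lemma interlaced_eq_swap_iff:
  assumes "interlaced_eq a b c d m" "length c = m" "length d = m" "p < m" "d ! p < c ! p"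
  shows "interlaced_eq a b (c[p := d ! p]) (d[p := c ! p]) m \<longleftrightarrow> c ! p < a ! p \<and> b ! p \<le> d ! p"
  using assms unfolding interlaced_eq_def by (auto simp: nth_list_update)

lemma interlaced_eq_swap_pred_iff:
  assumes "interlaced_eq a b c d m" "length c = m" "length d = m" "p < m" "Suc q = p" "c ! p < d ! q"
  shows "interlaced_eq a b (c[p := d ! q]) (d[q := c ! p]) m \<longleftrightarrow> a ! p \<le> c ! p \<and> d ! q < b ! q"
proof -
  have "d ! q < a ! q"
    using assms(1,4,5) unfolding interlaced_eq_def by auto
  then have "c ! p < a ! q"
    using assms(6) by linarith
  then show ?thesis
    using assms unfolding interlaced_eq_def by (auto simp: nth_list_update)
qed

lemma interlaced_succ_swap_iff:
  assumes "interlaced_succ a b c d m" "length c = Suc m" "length d = Suc m" "p \<le> m" "d ! p < c ! p"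
  shows "interlaced_succ a b (c[p := d ! p]) (d[p := c ! p]) m \<longleftrightarrow>
    c ! p \<le> a ! p \<and> (p < m \<longrightarrow> b ! p < d ! p)"
  using assms unfolding interlaced_succ_def by (auto simp: nth_list_update)

lemma interlaced_succ_swap_pred_iff:
  assumes "interlaced_succ a b c d m" "length c = Suc m" "length d = Suc m" "p \<le> m" "Suc q = p"
    and "c ! p < d ! q"
  shows "interlaced_succ a b (c[p := d ! q]) (d[q := c ! p]) m \<longleftrightarrow> a ! p < c ! p \<and> d ! q \<le> b ! q"
proof -
  have "d ! q \<le> a ! q"
    using assms(1,4,5) unfolding interlaced_succ_def by auto
  then have "c ! p \<le> a ! q"
    using assms(6) by linarith
  then show ?thesis
    using assms unfolding interlaced_succ_def by (auto simp: nth_list_update)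
qed

lemma interlaced_swap_iff:
  assumes "interlaced m m' a b c d" and mm: "m' = m \<or> m' = m + 1"
    and "length a = Suc m" "length b = m" "length c = m'" "length d = m'"
    and p: "p < m'" and pq: "q = p \<or> Suc q = p"
    and strict: "q = p \<Longrightarrow> d ! q < c ! p" "Suc q = p \<Longrightarrow> c ! p < d ! q"
  shows "interlaced m m' a b (c[p := d ! q]) (d[q := c ! p]) \<longleftrightarrow>
    (if m' = m \<and> q = p then ent a (Suc p) > ent c (Suc p) \<and> ent d (Suc p) \<ge> ent b (Suc p)
     else if m' = m then ent c (Suc p) \<ge> ent a (Suc p) \<and> ent b (Suc q) > ent d (Suc q)
     else if q = p then ent a (Suc p) \<ge> ent c (Suc p) \<and> ent d (Suc p) > ent b (Suc p)
     else ent c (Suc p) > ent a (Suc p) \<and> ent b (Suc q) \<ge> ent d (Suc q))"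
proof -
  from mm pq consider "m' = m" "q = p" | "m' = m" "Suc q = p" | "m' = m + 1" "q = p"
    | "m' = m + 1" "Suc q = p"
    by blast
  then show ?thesis
  proof cases
    case 1
    then show ?thesis
      using assms interlaced_eq_swap_iff[of a b c d m p] by (auto simp: interlaced_def ent_Suc)
  next
    case 2
    then show ?thesis
      using assms interlaced_eq_swap_pred_iff[of a b c d m p q] by (auto simp: interlaced_def ent_Suc)
  next
    case 3
    then show ?thesis
      using assms interlaced_succ_swap_iff[of a b c d m p] by (auto simp: interlaced_def ent_Suc)
  next
    case 4
    then show ?thesis
      using assms interlaced_succ_swap_pred_iff[of a b c d m p q] by (auto simp: interlaced_def ent_Suc)
  qed
qed

theorem lemma0301:
  fixes a b c d :: "nat list" and m m' k l :: nat
  assumes Z: "special_def1 (a, b)" and mZ: "length b = m"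
    and Z': "special_def0 (c, d)" and mZ': "length c = m'"
    and mm: "m' = m \<or> m' = m + 1"
    and k: "1 \<le> k" "k \<le> m'" and l: "1 \<le> l" "l \<le> m'" and kl: "l = k - 1 \<or> l = k"
    and pair: "{c ! (k - 1), d ! (l - 1)} \<subseteq> entries_I (c, d)"
    and nonempty: "Dset (a, b) (c, d) \<noteq> {}"
  shows "((a, b), move (c, d) {c ! (k - 1), d ! (l - 1)}) \<in> Dset (a, b) (c, d) \<longleftrightarrow>
    (if m' = m \<and> l = k then ent a k > ent c k \<and> ent d k \<ge> ent b k
     else if m' = m \<and> l = k - 1 then ent c k \<ge> ent a k \<and> ent b (k - 1) > ent d (k - 1)
     else if m' = m + 1 \<and> l = k then ent a k \<ge> ent c k \<and> ent d k > ent b k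
     else ent c k > ent a k \<and> ent b (k - 1) \<ge> ent d (k - 1))"
proof -
  obtain p q where kp: "k = Suc p" and lq: "l = Suc q"
    using k(1) l(1) by (metis Suc_pred' less_eq_Suc_le One_nat_def)
  have p: "p < length c" and pq: "q = p \<or> Suc q = p"
    using k(2) kl mZ' kp lq by auto
  have pair': "{c ! p, d ! q} \<subseteq> entries_I (c, d)"
    using pair kp lq by simp
  have fresh: "c ! p \<notin> set d" "d ! q \<notin> set c"
    using pair' p pq special_def0_nth(3)[OF Z'] by (auto simp: entries_I_def)
  note swap = move_consecutive_pair[OF Z' p pq pair']
  have lengths: "length a = Suc m" "length d = m'"
    using special_def1_nth(3)[OF Z] special_def0_nth(3)[OF Z'] mZ mZ' by simp_all
  have interlaced: "interlaced m m' a b c d"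
    using Dset_nonempty_imp_interlaced[OF Z mZ Z' mZ' _ nonempty] k by simp
  have "((a, b), move (c, d) {c ! p, d ! q}) \<in> Dset (a, b) (c, d) \<longleftrightarrow>
      interlaced m m' a b (c[p := d ! q]) (d[q := c ! p])"
    using mem_Dset_iff[OF Z mZ Z' mZ' _ swap(2)] self_mem_S_def[of "(a, b)"] Z lengths mZ swap(1)
    by (simp add: special_def1_def defect_def)
  then show ?thesis
    using interlaced_swap_iff[OF interlaced mm lengths(1) mZ mZ' lengths(2) _ pq
        special_def0_pair_strict[OF Z' p fresh]] mm pq p mZ'
    by (auto simp: kp lq)
qed

end
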